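(* Let $m, n \geq 1$ be distinct integers, let $R$ be a $k$-torsion free semiprime ring, where $k=6mn(m+n)|m-n|$, and let $F: R\to R$ be a nonzero generalized $(m,n)$-Jordan derivation. Then $F$ is a derivation which maps $R$ into $Z(R)$.
   Context: $R$ is an associative ring with center $Z(R)$. For an integer $k\geq 2$, $R$ is $k$-torsion free if $kx=0$ implies $x=0$ for all $x\in R$. $R$ is semiprime if $aRa=\{0\}$ implies $a=0$. An additive map $d:R\to R$ is a derivation if $d(xy)=d(x)y+xd(y)$ for all $x,y\in R$. For fixed integers $m,n\geq 0$ with $m+n\neq 0$, an additive map $d:R\to R$ is an $(m,n)$-Jordan derivation if $(m+n)d(x^2)=2md(x)x+2nxd(x)$ for all $x\in R$; an additive map $F:R\to R$ is a generalized $(m,n)$-Jordan derivation if there exists an $(m,n)$-Jordan derivation $d:R\to R$ such that $(m+n)F(x^2)=2mF(x)x+2nxd(x)$ for all $x\in R$. *)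

theory Defs
  imports Main
begin

text \<open>Associative rings, not necessarily unital: type class ring.
  Integer multiples are written via repeated addition.\<close>

definition natmul :: "nat \<Rightarrow> 'a::ring \<Rightarrow> 'a" where
  "natmul k x = (\<Sum>i<k. x)"

definition center :: "'a::ring set" where
  "center = {z. \<forall>x. z * x = x * z}"

definition torsion_free :: "nat \<Rightarrow> 'a::ring itself \<Rightarrow> bool" where
  "torsion_free k _ \<longleftrightarrow> (\<forall>x::'a. natmul k x = 0 \<longrightarrow> x = 0)"

definition semiprime :: "'a::ring itself \<Rightarrow> bool" where
  "semiprime _ \<longleftrightarrow> (\<forall>a::'a. (\<forall>r. a * r * a = 0) \<longrightarrow> a = 0)"

definition additive :: "('a::ring \<Rightarrow> 'a) \<Rightarrow> bool" where
  "additive f \<longleftrightarrow> (\<forall>x y. f (x + y) = f x + f y)"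

definition derivation :: "('a::ring \<Rightarrow> 'a) \<Rightarrow> bool" where
  "derivation d \<longleftrightarrow> additive d \<and> (\<forall>x y. d (x * y) = d x * y + x * d y)"

definition mn_jordan_derivation :: "nat \<Rightarrow> nat \<Rightarrow> ('a::ring \<Rightarrow> 'a) \<Rightarrow> bool" where
  "mn_jordan_derivation m n d \<longleftrightarrow> additive d \<and>
     (\<forall>x. natmul (m + n) (d (x * x)) = natmul (2 * m) (d x * x) + natmul (2 * n) (x * d x))"

definition gen_mn_jordan_derivation :: "nat \<Rightarrow> nat \<Rightarrow> ('a::ring \<Rightarrow> 'a) \<Rightarrow> bool" where
  "gen_mn_jordan_derivation m n F \<longleftrightarrow> additive F \<and>
     (\<exists>d. mn_jordan_derivation m n d \<and>
        (\<forall>x. natmul (m + n) (F (x * x)) = natmul (2 * m) (F x * x) + natmul (2 * n) (x * d x)))"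

end

theory Submission
  imports Defs
begin

(* Write a = [x, d x].  Linearizing (m + n) d(x x) = 2m d(x) x + 2n x d(x) and
   evaluating d on (x x y + y x x) x + x (x x y + y x x) = x x (y x + x y) + (y x + x y) x x in
   two ways gives an identity which, with the torsion hypotheses, yields [x, [x, [x, a]]] = 0,
   then [x, [x, a]] = 0 and a [x, [x, y]] = [x, [x, y]] a = 0.  Polarizing these in x and using
   semiprimeness gives a = 0, so d is commuting, hence a Jordan derivation.  On a 2-torsion free
   semiprime ring Jordan derivations are derivations (Herstein, Cusack), and commuting
   derivations are central.  Finally G = F - d satisfies (m + n) G(x x) = 2m G(x) x, which forces
   G(x) x = 0 and then G = 0. *)

section \<open>Integer multiples\<close>

(* The class ring has no unit, so c x cannot be written as of_int c * x. *)
definition intmul :: "int \<Rightarrow> 'a::ab_group_add \<Rightarrow> 'a"  (infixr "\<cdot>\<^sub>\<int>" 75) where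
  "c \<cdot>\<^sub>\<int> x = (if 0 \<le> c then (\<Sum>i<nat c. x) else - (\<Sum>i<nat (- c). x))"

lemma intmul_0_left [simp]: "0 \<cdot>\<^sub>\<int> x = 0"
  by (simp add: intmul_def)

lemma intmul_1_left [simp]: "1 \<cdot>\<^sub>\<int> x = x"
  by (simp add: intmul_def)

lemma intmul_of_nat: "int k \<cdot>\<^sub>\<int> x = (\<Sum>i<k. x)"
  by (simp add: intmul_def)

lemma intmul_minus_left: "(- c) \<cdot>\<^sub>\<int> x = - (c \<cdot>\<^sub>\<int> x)"
  by (simp add: intmul_def)

lemma intmul_plus_1: "(c + 1) \<cdot>\<^sub>\<int> x = c \<cdot>\<^sub>\<int> x + x"
proof (cases "0 \<le> c")
  case True
  then have "nat (c + 1) = Suc (nat c)" by simp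
  with True show ?thesis by (simp add: intmul_def add.commute)
next
  case False
  then have "nat (- c) = Suc (nat (- (c + 1)))" by simp
  with False show ?thesis by (simp add: intmul_def)
qed

lemma intmul_minus_1: "(c - 1) \<cdot>\<^sub>\<int> x = c \<cdot>\<^sub>\<int> x - x"
  using intmul_plus_1[of "c - 1" x] by (simp add: eq_diff_eq)

lemma intmul_add_left: "(c + e) \<cdot>\<^sub>\<int> x = c \<cdot>\<^sub>\<int> x + e \<cdot>\<^sub>\<int> x"
proof (induction e rule: int_induct[where k = 0])
  case (step1 e)
  then show ?case using intmul_plus_1[of "c + e" x] intmul_plus_1[of e x] by (simp add: add.assoc)
next
  case (step2 e)
  then show ?case using intmul_minus_1[of "c + e" x] intmul_minus_1[of e x] by (simp add: add_diff_eq)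
qed simp

lemma intmul_add_right: "c \<cdot>\<^sub>\<int> (x + y) = c \<cdot>\<^sub>\<int> x + c \<cdot>\<^sub>\<int> y"
  by (simp add: intmul_def sum.distrib)

lemma intmul_0_right [simp]: "c \<cdot>\<^sub>\<int> 0 = 0"
  by (simp add: intmul_def)

lemma intmul_minus_right: "c \<cdot>\<^sub>\<int> (- x) = - (c \<cdot>\<^sub>\<int> x)"
  by (simp add: intmul_def sum_negf)

lemma intmul_diff_right: "c \<cdot>\<^sub>\<int> (x - y) = c \<cdot>\<^sub>\<int> x - c \<cdot>\<^sub>\<int> y"
  unfolding diff_conv_add_uminus intmul_add_right intmul_minus_right ..

lemma intmul_diff_left: "(c - e) \<cdot>\<^sub>\<int> x = c \<cdot>\<^sub>\<int> x - e \<cdot>\<^sub>\<int> x"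
  unfolding diff_conv_add_uminus intmul_add_left intmul_minus_left ..

lemma intmul_mult: "(c * e) \<cdot>\<^sub>\<int> x = c \<cdot>\<^sub>\<int> (e \<cdot>\<^sub>\<int> x)"
proof (induction c rule: int_induct[where k = 0])
  case (step1 c)
  then show ?case by (simp add: distrib_right intmul_add_left intmul_plus_1)
next
  case (step2 c)
  then show ?case by (simp add: left_diff_distrib intmul_diff_left intmul_minus_1)
qed simp

lemma intmul_commute: "c \<cdot>\<^sub>\<int> (e \<cdot>\<^sub>\<int> x) = e \<cdot>\<^sub>\<int> (c \<cdot>\<^sub>\<int> x)"
  by (metis intmul_mult mult.commute)

lemma intmul_numeral_Bit0: "numeral (Num.Bit0 k) \<cdot>\<^sub>\<int> x = numeral k \<cdot>\<^sub>\<int> x + numeral k \<cdot>\<^sub>\<int> x"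
  by (metis numeral_Bit0 intmul_add_left)

lemma intmul_numeral_Bit1:
  "numeral (Num.Bit1 k) \<cdot>\<^sub>\<int> x = numeral k \<cdot>\<^sub>\<int> x + numeral k \<cdot>\<^sub>\<int> x + x"
  by (metis numeral_Bit1 intmul_add_left intmul_1_left)

lemma mult_intmul_left: "(c \<cdot>\<^sub>\<int> x) * y = c \<cdot>\<^sub>\<int> (x * (y::'a::ring))"
  by (simp add: intmul_def sum_distrib_right)

lemma mult_intmul_right: "x * (c \<cdot>\<^sub>\<int> y) = c \<cdot>\<^sub>\<int> (x * (y::'a::ring))"
  by (simp add: intmul_def sum_distrib_left)

lemmas intmul_simps = intmul_add_left intmul_add_right intmul_minus_left intmul_minus_right
  intmul_diff_left intmul_diff_right intmul_mult intmul_commute intmul_numeral_Bit0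
  intmul_numeral_Bit1 mult_intmul_left mult_intmul_right

lemma intmul_additive:
  fixes f :: "'a::ab_group_add \<Rightarrow> 'b::ab_group_add"
  assumes "\<And>x y. f (x + y) = f x + f y"
  shows "f (c \<cdot>\<^sub>\<int> x) = c \<cdot>\<^sub>\<int> f x"
proof -
  have "f 0 = 0"
    using assms[of 0 0] by simp
  then have sum: "f (\<Sum>i<k. x) = (\<Sum>i<k. f x)" for k :: nat
    by (induction k) (simp_all add: assms)
  have "f y + f (- y) = 0" for y
    using assms[of y "- y"] \<open>f 0 = 0\<close> by simp
  then have "f (- y) = - f y" for y
    by (simp add: eq_neg_iff_add_eq_0 add.commute)
  with sum show ?thesis
    by (simp add: intmul_def)
qed

lemma natmul_eq_intmul: "natmul k x = int k \<cdot>\<^sub>\<int> x"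
  by (simp add: natmul_def intmul_of_nat)

definition commutator :: "'a::ring \<Rightarrow> 'a \<Rightarrow> 'a"  ("\<lbrakk>_, _\<rbrakk>") where
  "\<lbrakk>x, y\<rbrakk> = x * y - y * x"

lemma commutator_0_right [simp]: "\<lbrakk>x, 0\<rbrakk> = 0"
  by (simp add: commutator_def)

lemma commutator_add_left: "\<lbrakk>x + u, y\<rbrakk> = \<lbrakk>x, y\<rbrakk> + \<lbrakk>u, y\<rbrakk>"
  by (simp add: commutator_def algebra_simps)

lemma commutator_add_right: "\<lbrakk>x, y + v\<rbrakk> = \<lbrakk>x, y\<rbrakk> + \<lbrakk>x, v\<rbrakk>"
  by (simp add: commutator_def algebra_simps)

section \<open>Torsion and semiprimeness\<close>

lemma torsion_free_intmul_cancel: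
  assumes "torsion_free N TYPE('a::ring)" and "c dvd int N" and "c \<cdot>\<^sub>\<int> (x::'a) = 0"
  shows "x = 0"
proof -
  obtain e where "int N = c * e"
    using assms(2) by blast
  then have "natmul N x = e \<cdot>\<^sub>\<int> (c \<cdot>\<^sub>\<int> x)"
    by (simp add: natmul_eq_intmul mult.commute[of c e] intmul_mult)
  with assms(1,3) show ?thesis
    unfolding torsion_free_def by simp
qed

lemma torsion_free_2_cancel:
  assumes "torsion_free 2 TYPE('a::ring)" and "x + x = (0::'a)"
  shows "x = 0"
  using assms torsion_free_intmul_cancel[of 2 2 x]
  by (simp add: intmul_numeral_Bit0)

lemma semiprimeD:
  assumes "semiprime TYPE('a::ring)" and "\<And>r. a * r * a = (0::'a)"
  shows "a = 0"
  using assms unfolding semiprime_def by blast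

lemma semiprime_sandwich_cancel:
  fixes a b c e :: "'a::ring"
  assumes "semiprime TYPE('a)" and sum: "\<And>w. a * w * b + c * w * e = 0" and "\<And>r. b * r * c = 0"
  shows "a * w * b = 0"
proof (rule semiprimeD[OF assms(1)])
  fix r
  have "a * w * b = - (c * w * e)"
    using sum[of w] by (simp add: eq_neg_iff_add_eq_0)
  then have "a * w * b * r * (a * w * b) = a * w * b * r * (- (c * w * e))"
    by simp
  also have "\<dots> = - (a * w * (b * r * c) * w * e)"
    by (simp add: mult.assoc)
  finally show "a * w * b * r * (a * w * b) = 0"
    by (simp add: assms(3))
qed

lemma semiprime_sandwich_antisym:
  fixes u v :: "'a::ring"
  assumes "semiprime TYPE('a)" and "torsion_free 2 TYPE('a)"
    and sum: "\<And>w. u * w * v + v * w * u = 0"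
  shows "v * w * u = 0"
proof -
  have vanish: "v * x * u * y * u = 0" for x y
  proof (rule torsion_free_2_cancel[OF assms(2)])
    have "v * x * u * y * u + v * x * u * y * u
        = (u * (x * u * y) * v + v * (x * u * y) * u) - u * x * (u * y * v + v * y * u)
          + (u * x * v + v * x * u) * y * u"
      by (simp add: algebra_simps)
    then show "v * x * u * y * u + v * x * u * y * u = 0"
      by (simp add: sum)
  qed
  show ?thesis
  proof (rule semiprimeD[OF assms(1)])
    fix r
    show "v * w * u * r * (v * w * u) = 0"
      using vanish[of w "r * v * w"] by (simp add: mult.assoc)
  qed
qed

lemma semiprime_central_if_annihilates_commutators:
  fixes c :: "'a::ring"
  assumes "semiprime TYPE('a)" and annihilates: "\<And>w u v. c * w * \<lbrakk>u, v\<rbrakk> = 0"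
  shows "c \<in> center"
proof -
  have "\<lbrakk>c, r\<rbrakk> = 0" for r
  proof (rule semiprimeD[OF assms(1)])
    fix s
    have "\<lbrakk>c, r\<rbrakk> * s * \<lbrakk>c, r\<rbrakk> = c * (r * s) * \<lbrakk>c, r\<rbrakk> - r * (c * s * \<lbrakk>c, r\<rbrakk>)"
      by (simp add: commutator_def algebra_simps)
    then show "\<lbrakk>c, r\<rbrakk> * s * \<lbrakk>c, r\<rbrakk> = 0"
      by (simp add: annihilates)
  qed
  then show ?thesis
    by (simp add: center_def commutator_def)
qed

lemma semiprime_central_cube_zero:
  fixes c :: "'a::ring"
  assumes "semiprime TYPE('a)" and "c \<in> center" and cube: "c * c * c = 0"
  shows "c = 0"
proof -
  have central: "c * r = r * c" for r
    using assms(2) unfolding center_def by blast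
  have "c * c = 0"
    by (rule semiprimeD[OF assms(1)]) (metis cube central mult.assoc mult_zero_left)
  then show ?thesis
    by (metis semiprimeD[OF assms(1)] central mult.assoc mult_zero_left)
qed

lemma semiprime_zero_if_annihilates_jordan_products:
  fixes c :: "'a::ring"
  assumes "semiprime TYPE('a)" and "torsion_free 2 TYPE('a)"
    and annihilates: "\<And>v w. c * (v * w + w * v) = 0"
  shows "c = 0"
proof -
  have swap: "c * v * w = - (c * w * v)" for v w
    using annihilates[of v w] by (simp add: distrib_left mult.assoc eq_neg_iff_add_eq_0)
  have sign: "c * y * z * w = - (c * z * y * w)" for y z w
    using swap[of y z] by simp
  have shift: "c * y * z * w = c * y * w * z" for y z w
  proof -
    have "c * y * z * w = - (c * w * y * z)"
      using swap[of "y * z" w] by (simp add: mult.assoc)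
    also have "\<dots> = c * y * w * z"
      using sign[of w y z] by simp
    finally show ?thesis .
  qed
  have "c * y * z * w = - (c * y * z * w)" for y z w
  proof -
    have "c * y * z * w = c * y * w * z" by (rule shift)
    also have "\<dots> = - (c * w * y * z)" by (rule sign)
    also have "\<dots> = - (c * w * z * y)" by (simp add: shift[of w y z])
    also have "\<dots> = c * z * w * y" by (simp add: sign[of w z y])
    also have "\<dots> = c * z * y * w" by (rule shift)
    also have "\<dots> = - (c * y * z * w)" by (rule sign)
    finally show ?thesis .
  qed
  then have "c * y * z * w + c * y * z * w = 0" for y z w
    by (simp add: eq_neg_iff_add_eq_0)
  then have vanish3: "c * y * z * w = 0" for y z w
    by (rule torsion_free_2_cancel[OF assms(2)])
  have vanish2: "c * y * z = 0" for y z
    by (rule semiprimeD[OF assms(1)]) (metis vanish3 mult.assoc)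
  have vanish1: "c * y = 0" for y
    by (rule semiprimeD[OF assms(1)]) (metis vanish2 mult.assoc)
  show ?thesis
    by (rule semiprimeD[OF assms(1)]) (simp add: vanish1)
qed

lemma derivationD:
  assumes "derivation D"
  shows "D (x + y) = D x + D y" and "D (x * y) = D x * y + x * D y"
  using assms unfolding derivation_def additive_def by blast+

lemma commuting_derivation_central:
  fixes D :: "'a::ring \<Rightarrow> 'a"
  assumes der: "derivation D" and "semiprime TYPE('a)" and commuting: "\<And>x. \<lbrakk>x, D x\<rbrakk> = 0"
  shows "D x \<in> center"
proof -
  note add = derivationD(1)[OF der] and leibniz = derivationD(2)[OF der]
  have polar: "\<lbrakk>x, D y\<rbrakk> + \<lbrakk>y, D x\<rbrakk> = 0" for x y
    using commuting[of "x + y"] commuting[of x] commuting[of y]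
    by (simp add: add commutator_def algebra_simps)
  have "\<lbrakk>x, y\<rbrakk> * D x = (\<lbrakk>x, D (y * x)\<rbrakk> + \<lbrakk>y * x, D x\<rbrakk>) - (\<lbrakk>x, D y\<rbrakk> + \<lbrakk>y, D x\<rbrakk>) * x
      - (y * \<lbrakk>x, D x\<rbrakk> + y * \<lbrakk>x, D x\<rbrakk>)" for x y
    by (simp add: leibniz commutator_def algebra_simps)
  then have left: "\<lbrakk>x, y\<rbrakk> * D x = 0" for x y
    by (simp add: polar commuting)
  have "\<lbrakk>x, y\<rbrakk> * r * D x = \<lbrakk>x, y * r\<rbrakk> * D x - y * (\<lbrakk>x, r\<rbrakk> * D x)" for x y r
    by (simp add: commutator_def algebra_simps)
  then have sandwich: "\<lbrakk>x, y\<rbrakk> * r * D x = 0" for x y r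
    by (simp add: left)
  have "\<lbrakk>z, D x\<rbrakk> * r * D x = \<lbrakk>x + z, D x\<rbrakk> * r * D (x + z) - \<lbrakk>z, D x\<rbrakk> * r * D z
      - \<lbrakk>x, D x\<rbrakk> * r * D (x + z)" for z x r
    by (simp add: add commutator_def algebra_simps)
  then have vanish: "\<lbrakk>z, D x\<rbrakk> * r * D x = 0" for z x r
    by (simp only: sandwich commuting) simp
  have "\<lbrakk>r, D x\<rbrakk> = 0" for r
  proof (rule semiprimeD[OF assms(2)])
    fix s
    have "\<lbrakk>r, D x\<rbrakk> * s * \<lbrakk>r, D x\<rbrakk> = \<lbrakk>r, D x\<rbrakk> * (s * r) * D x - \<lbrakk>r, D x\<rbrakk> * s * D x * r"
      by (simp add: commutator_def algebra_simps)
    then show "\<lbrakk>r, D x\<rbrakk> * s * \<lbrakk>r, D x\<rbrakk> = 0"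
      by (simp add: vanish)
  qed
  then show ?thesis
    by (simp add: center_def commutator_def)
qed

section \<open>Jordan derivations of semiprime rings\<close>

locale jordan_derivation_semiprime =
  fixes d :: "'a::ring \<Rightarrow> 'a"
  assumes additive: "additive d"
    and square: "\<And>x. d (x * x) = d x * x + x * d x"
    and torsion_free_2: "torsion_free 2 TYPE('a)"
    and semiprime: "semiprime TYPE('a)"
begin

lemma add: "d (x + y) = d x + d y"
  using additive unfolding additive_def by blast

lemma zero [simp]: "d 0 = 0"
  using add[of 0 0] by simp

lemma diff: "d (x - y) = d x - d y"
  by (metis add diff_add_cancel eq_diff_eq)

lemma polar: "d (u * v + v * u) = d u * v + u * d v + d v * u + v * d u"
proof -
  have "(u + v) * (u + v) = u * u + (u * v + v * u) + v * v"
    by (simp add: algebra_simps)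
  then have "d (u * v + v * u) = d ((u + v) * (u + v)) - d (u * u) - d (v * v)"
    by (simp add: add)
  also have "\<dots> = d u * v + u * d v + d v * u + v * d u"
    by (simp only: square add) (simp add: algebra_simps)
  finally show ?thesis .
qed

lemma triple: "d (x * y * x) = d x * y * x + x * d y * x + x * y * d x"
proof -
  have "x * (x * y + y * x) + (x * y + y * x) * x = (x * x * y + y * (x * x)) + (x * y * x + x * y * x)"
    by (simp add: algebra_simps)
  then have "d (x * (x * y + y * x) + (x * y + y * x) * x) = d (x * x * y + y * (x * x)) + (d (x * y * x) + d (x * y * x))"
    by (simp only: add)
  then have expanded: "d x * (x * y + y * x) + x * (d x * y + x * d y + d y * x + y * d x)
      + (d x * y + x * d y + d y * x + y * d x) * x + (x * y + y * x) * d x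
    = (d x * x + x * d x) * y + x * x * d y + d y * (x * x) + y * (d x * x + x * d x)
      + (d (x * y * x) + d (x * y * x))"
    by (simp only: polar square)
  show ?thesis
  proof (rule torsion_free_2_cancel[OF torsion_free_2, THEN eq_iff_diff_eq_0[THEN iffD2]])
    show "d (x * y * x) - (d x * y * x + x * d y * x + x * y * d x)
      + (d (x * y * x) - (d x * y * x + x * d y * x + x * y * d x)) = 0"
      using expanded by (simp add: algebra_simps)
  qed
qed

lemma triple_polar:
  "d (x * y * z + z * y * x) = d x * y * z + x * d y * z + x * y * d z + d z * y * x + z * d y * x + z * y * d x"
proof -
  have "(x + z) * y * (x + z) = x * y * x + (x * y * z + z * y * x) + z * y * z"
    by (simp add: algebra_simps)
  then have "d (x * y * z + z * y * x) = d ((x + z) * y * (x + z)) - d (x * y * x) - d (z * y * z)"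
    by (simp add: add)
  also have "\<dots> = d x * y * z + x * d y * z + x * y * d z + d z * y * x + z * d y * x + z * y * d x"
    by (simp only: triple add) (simp add: algebra_simps)
  finally show ?thesis .
qed

definition deviation :: "'a \<Rightarrow> 'a \<Rightarrow> 'a" where
  "deviation x y = d (x * y) - d x * y - x * d y"

(* Herstein's identity: compute d of (xy)w(yx) + (yx)w(xy) = x(ywy)x + y(xwx)y in two ways. *)
lemma deviation_commutator_sandwich:
  "deviation x y * w * \<lbrakk>x, y\<rbrakk> + \<lbrakk>x, y\<rbrakk> * w * deviation x y = 0"
proof -
  have "x * y * w * (y * x) + y * x * w * (x * y) = x * (y * w * y) * x + y * (x * w * x) * y"
    by (simp add: algebra_simps)
  then have "d (x * y * w * (y * x) + y * x * w * (x * y)) = d (x * (y * w * y) * x + y * (x * w * x) * y)"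
    by (simp only:)
  then have expanded: "d (x * y) * w * (y * x) + x * y * d w * (y * x) + x * y * w * d (y * x)
      + d (y * x) * w * (x * y) + y * x * d w * (x * y) + y * x * w * d (x * y)
    = d x * (y * w * y) * x + x * (d y * w * y + y * d w * y + y * w * d y) * x + x * (y * w * y) * d x
      + (d y * (x * w * x) * y + y * (d x * w * x + x * d w * x + x * w * d x) * y + y * (x * w * x) * d y)"
    (is "?L = ?R")
    by (simp only: triple_polar) (simp only: add triple)
  have swap: "d (y * x) = d x * y + x * d y + d y * x + y * d x - d (x * y)"
    using polar[of x y] by (simp add: add eq_diff_eq add.commute)
  have "deviation x y * w * \<lbrakk>x, y\<rbrakk> + \<lbrakk>x, y\<rbrakk> * w * deviation x y = ?R - ?L"
    unfolding deviation_def commutator_def swap by (simp add: algebra_simps)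
  also have "\<dots> = 0"
    using expanded by simp
  finally show ?thesis .
qed

lemma deviation_add_left: "deviation (x + u) y = deviation x y + deviation u y"
  by (simp add: deviation_def add algebra_simps)

lemma deviation_add_right: "deviation x (y + v) = deviation x y + deviation x v"
  by (simp add: deviation_def add algebra_simps)

lemma deviation_sandwich_left: "deviation x y * w * \<lbrakk>x, y\<rbrakk> = 0"
  using semiprime_sandwich_antisym[OF semiprime torsion_free_2, of "\<lbrakk>x, y\<rbrakk>" "deviation x y"]
    deviation_commutator_sandwich by (simp add: add.commute)

lemma deviation_sandwich_right: "\<lbrakk>x, y\<rbrakk> * w * deviation x y = 0"
  using semiprime_sandwich_antisym[OF semiprime torsion_free_2, of "deviation x y" "\<lbrakk>x, y\<rbrakk>"]
    deviation_commutator_sandwich by simp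

lemma deviation_sandwich_left2: "deviation x y * w * \<lbrakk>u, y\<rbrakk> = 0"
proof (rule semiprime_sandwich_cancel[OF semiprime])
  show "deviation x y * w * \<lbrakk>u, y\<rbrakk> + deviation u y * w * \<lbrakk>x, y\<rbrakk> = 0" for w
    using deviation_sandwich_left[of "x + u" y w] deviation_sandwich_left[of x y w]
      deviation_sandwich_left[of u y w]
    by (simp add: deviation_add_left commutator_add_left algebra_simps)
  show "\<lbrakk>u, y\<rbrakk> * r * deviation u y = 0" for r
    by (rule deviation_sandwich_right)
qed

lemma deviation_sandwich_right2: "\<lbrakk>u, y\<rbrakk> * w * deviation x y = 0"
proof (rule semiprime_sandwich_cancel[OF semiprime])
  show "\<lbrakk>u, y\<rbrakk> * w * deviation x y + \<lbrakk>x, y\<rbrakk> * w * deviation u y = 0" for w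
    using deviation_sandwich_right[of "x + u" y w] deviation_sandwich_right[of x y w]
      deviation_sandwich_right[of u y w]
    by (simp add: deviation_add_left commutator_add_left algebra_simps)
  show "deviation x y * r * \<lbrakk>x, y\<rbrakk> = 0" for r
    by (rule deviation_sandwich_left)
qed

lemma deviation_annihilates_commutators: "deviation x y * w * \<lbrakk>u, v\<rbrakk> = 0"
proof (rule semiprime_sandwich_cancel[OF semiprime])
  show "deviation x y * w * \<lbrakk>u, v\<rbrakk> + deviation x v * w * \<lbrakk>u, y\<rbrakk> = 0" for w
    using deviation_sandwich_left2[of x "y + v" w u] deviation_sandwich_left2[of x y w u]
      deviation_sandwich_left2[of x v w u]
    by (simp add: deviation_add_right commutator_add_right algebra_simps)
  show "\<lbrakk>u, v\<rbrakk> * r * deviation x v = 0" for r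
    by (rule deviation_sandwich_right2)
qed

lemma deviation_central: "deviation x y \<in> center"
  using semiprime_central_if_annihilates_commutators[OF semiprime]
    deviation_annihilates_commutators by blast

lemma deviation_mult_commutator: "deviation x y * \<lbrakk>u, v\<rbrakk> = 0"
proof (rule semiprimeD[OF semiprime])
  fix r
  have "deviation x y * \<lbrakk>u, v\<rbrakk> * r * (deviation x y * \<lbrakk>u, v\<rbrakk>)
      = deviation x y * (\<lbrakk>u, v\<rbrakk> * r * deviation x y) * \<lbrakk>u, v\<rbrakk>"
    by (simp add: mult.assoc)
  then show "deviation x y * \<lbrakk>u, v\<rbrakk> * r * (deviation x y * \<lbrakk>u, v\<rbrakk>) = 0"
    by (simp add: deviation_annihilates_commutators)
qed

(* Apply d to c [x, y] + [x, y] c = 0 and use 2 c = d [x, y] - [d x, y] - [x, d y]. *)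
lemma deviation_cube_zero: "deviation x y * deviation x y * deviation x y = 0"
proof -
  define c where "c = deviation x y"
  have central: "c * r = r * c" for r
    using deviation_central unfolding c_def center_def by blast
  have kills: "c * \<lbrakk>u, v\<rbrakk> = 0" for u v
    unfolding c_def by (rule deviation_mult_commutator)
  have twice: "c + c = d \<lbrakk>x, y\<rbrakk> - \<lbrakk>d x, y\<rbrakk> - \<lbrakk>x, d y\<rbrakk>"
  proof -
    have "d (y * x) = d x * y + x * d y + d y * x + y * d x - d (x * y)"
      using polar[of x y] by (simp add: add eq_diff_eq add.commute)
    then show ?thesis
      unfolding c_def deviation_def commutator_def diff by (simp add: algebra_simps)
  qed
  have "c * \<lbrakk>x, y\<rbrakk> + \<lbrakk>x, y\<rbrakk> * c = 0"
    using kills[of x y] central[of "\<lbrakk>x, y\<rbrakk>"] by simp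
  then have "d c * \<lbrakk>x, y\<rbrakk> + c * d \<lbrakk>x, y\<rbrakk> + d \<lbrakk>x, y\<rbrakk> * c + \<lbrakk>x, y\<rbrakk> * d c = 0"
    using polar[of c "\<lbrakk>x, y\<rbrakk>"] by simp
  then have "c * (d c * \<lbrakk>x, y\<rbrakk> + c * d \<lbrakk>x, y\<rbrakk> + d \<lbrakk>x, y\<rbrakk> * c + \<lbrakk>x, y\<rbrakk> * d c) = 0"
    by simp
  moreover have "c * (d c * \<lbrakk>x, y\<rbrakk>) = d c * (c * \<lbrakk>x, y\<rbrakk>)"
    using central[of "d c"] by (metis mult.assoc)
  moreover have "c * (d \<lbrakk>x, y\<rbrakk> * c) = c * c * d \<lbrakk>x, y\<rbrakk>"
    using central[of "d \<lbrakk>x, y\<rbrakk>"] by (metis mult.assoc)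
  moreover have "c * (\<lbrakk>x, y\<rbrakk> * d c) = 0"
    using kills[of x y] by (simp add: mult.assoc[symmetric])
  ultimately have "c * c * d \<lbrakk>x, y\<rbrakk> + c * c * d \<lbrakk>x, y\<rbrakk> = 0"
    by (simp add: distrib_left kills mult.assoc)
  then have "c * c * d \<lbrakk>x, y\<rbrakk> = 0"
    by (rule torsion_free_2_cancel[OF torsion_free_2])
  then have "c * c * c + c * c * c = 0"
    using twice kills by (simp add: distrib_left[symmetric] right_diff_distrib mult.assoc)
  then show ?thesis
    unfolding c_def[symmetric] by (rule torsion_free_2_cancel[OF torsion_free_2])
qed

lemma deviation_zero: "deviation x y = 0"
  using semiprime_central_cube_zero[OF semiprime deviation_central deviation_cube_zero] .

theorem derivation: "derivation d"
  using deviation_zero additive unfolding derivation_def deviation_def by (simp add: algebra_simps)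

end

section \<open>Polarization\<close>

(* The values at t = 1, -1, 2, -2 suffice: 8 (f 1 - f (-1)) - (f 2 - f (-2)) is 12 times
   the coefficient of t in the polynomial f t. *)
lemma polarize_cubic:
  fixes F :: "'a::ab_group_add \<Rightarrow> 'a \<Rightarrow> 'a \<Rightarrow> 'b::ab_group_add"
  assumes add1: "\<And>p p' q r. F (p + p') q r = F p q r + F p' q r"
    and add2: "\<And>p q q' r. F p (q + q') r = F p q r + F p q' r"
    and add3: "\<And>p q r r'. F p q (r + r') = F p q r + F p q r'"
    and vanish: "\<And>t. F (b1 + t \<cdot>\<^sub>\<int> e1) (b2 + t \<cdot>\<^sub>\<int> e2) (b3 + t \<cdot>\<^sub>\<int> e3) = 0"
    and cancel_2: "\<And>y::'b. 2 \<cdot>\<^sub>\<int> y = 0 \<Longrightarrow> y = 0"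
    and cancel_3: "\<And>y::'b. 3 \<cdot>\<^sub>\<int> y = 0 \<Longrightarrow> y = 0"
  shows "F e1 b2 b3 + F b1 e2 b3 + F b1 b2 e3 = 0"
proof -
  have scale: "F (c \<cdot>\<^sub>\<int> p) q r = c \<cdot>\<^sub>\<int> F p q r" "F p (c \<cdot>\<^sub>\<int> q) r = c \<cdot>\<^sub>\<int> F p q r"
    "F p q (c \<cdot>\<^sub>\<int> r) = c \<cdot>\<^sub>\<int> F p q r" for c p q r
    by (rule intmul_additive; simp add: add1 add2 add3)+
  define f where "f t = F (b1 + t \<cdot>\<^sub>\<int> e1) (b2 + t \<cdot>\<^sub>\<int> e2) (b3 + t \<cdot>\<^sub>\<int> e3)" for t
  have "8 \<cdot>\<^sub>\<int> (f 1 - f (-1)) - (f 2 - f (-2))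
    = (2 * 2 * 3) \<cdot>\<^sub>\<int> (F e1 b2 b3 + F b1 e2 b3 + F b1 b2 e3)"
    unfolding f_def add1 add2 add3 scale by (simp add: intmul_simps algebra_simps)
  also have "\<dots> = 2 \<cdot>\<^sub>\<int> 2 \<cdot>\<^sub>\<int> 3 \<cdot>\<^sub>\<int> (F e1 b2 b3 + F b1 e2 b3 + F b1 b2 e3)"
    by (simp only: intmul_mult)
  finally have "2 \<cdot>\<^sub>\<int> 2 \<cdot>\<^sub>\<int> 3 \<cdot>\<^sub>\<int> (F e1 b2 b3 + F b1 e2 b3 + F b1 b2 e3) = 0"
    using vanish[of 1] vanish[of "-1"] vanish[of 2] vanish[of "-2"] by (simp add: f_def)
  then show ?thesis
    using cancel_2 cancel_3 by blast
qed

lemma polarize_quartic: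
  fixes F :: "'a::ab_group_add \<Rightarrow> 'a \<Rightarrow> 'a \<Rightarrow> 'a \<Rightarrow> 'b::ab_group_add"
  assumes add1: "\<And>p p' q r s. F (p + p') q r s = F p q r s + F p' q r s"
    and add2: "\<And>p q q' r s. F p (q + q') r s = F p q r s + F p q' r s"
    and add3: "\<And>p q r r' s. F p q (r + r') s = F p q r s + F p q r' s"
    and add4: "\<And>p q r s s'. F p q r (s + s') = F p q r s + F p q r s'"
    and vanish: "\<And>t. F (b1 + t \<cdot>\<^sub>\<int> e1) (b2 + t \<cdot>\<^sub>\<int> e2) (b3 + t \<cdot>\<^sub>\<int> e3) (b4 + t \<cdot>\<^sub>\<int> e4) = 0"
    and cancel_2: "\<And>y::'b. 2 \<cdot>\<^sub>\<int> y = 0 \<Longrightarrow> y = 0"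
    and cancel_3: "\<And>y::'b. 3 \<cdot>\<^sub>\<int> y = 0 \<Longrightarrow> y = 0"
  shows "F e1 b2 b3 b4 + F b1 e2 b3 b4 + F b1 b2 e3 b4 + F b1 b2 b3 e4 = 0"
proof -
  have scale: "F (c \<cdot>\<^sub>\<int> p) q r s = c \<cdot>\<^sub>\<int> F p q r s" "F p (c \<cdot>\<^sub>\<int> q) r s = c \<cdot>\<^sub>\<int> F p q r s"
    "F p q (c \<cdot>\<^sub>\<int> r) s = c \<cdot>\<^sub>\<int> F p q r s" "F p q r (c \<cdot>\<^sub>\<int> s) = c \<cdot>\<^sub>\<int> F p q r s" for c p q r s
    by (rule intmul_additive; simp add: add1 add2 add3 add4)+
  define f where
    "f t = F (b1 + t \<cdot>\<^sub>\<int> e1) (b2 + t \<cdot>\<^sub>\<int> e2) (b3 + t \<cdot>\<^sub>\<int> e3) (b4 + t \<cdot>\<^sub>\<int> e4)" for t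
  have "8 \<cdot>\<^sub>\<int> (f 1 - f (-1)) - (f 2 - f (-2))
    = (2 * 2 * 3) \<cdot>\<^sub>\<int> (F e1 b2 b3 b4 + F b1 e2 b3 b4 + F b1 b2 e3 b4 + F b1 b2 b3 e4)"
    unfolding f_def add1 add2 add3 add4 scale by (simp add: intmul_simps algebra_simps)
  also have "\<dots> = 2 \<cdot>\<^sub>\<int> 2 \<cdot>\<^sub>\<int> 3 \<cdot>\<^sub>\<int> (F e1 b2 b3 b4 + F b1 e2 b3 b4 + F b1 b2 e3 b4 + F b1 b2 b3 e4)"
    by (simp only: intmul_mult)
  finally have "2 \<cdot>\<^sub>\<int> 2 \<cdot>\<^sub>\<int> 3 \<cdot>\<^sub>\<int> (F e1 b2 b3 b4 + F b1 e2 b3 b4 + F b1 b2 e3 b4 + F b1 b2 b3 e4) = 0"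
    using vanish[of 1] vanish[of "-1"] vanish[of 2] vanish[of "-2"] by (simp add: f_def)
  then show ?thesis
    using cancel_2 cancel_3 by blast
qed

section \<open>(m,n)-Jordan derivations\<close>

locale mn_torsion_free_semiprime =
  fixes m n :: nat
  assumes torsion_free: "torsion_free (6 * m * n * (m + n) * nat \<bar>int m - int n\<bar>) TYPE('a::ring)"
    and semiprime: "semiprime TYPE('a)"
begin

lemma cancel:
  assumes "c dvd 6 * int m * int n * (int m + int n) * (int m - int n)" and "c \<cdot>\<^sub>\<int> (x::'a) = 0"
  shows "x = 0"
proof (rule torsion_free_intmul_cancel[OF torsion_free _ assms(2)])
  have "6 * int m * int n * (int m + int n) * (int m - int n) dvd
      6 * int m * int n * (int m + int n) * \<bar>int m - int n\<bar>"
    by (rule mult_dvd_mono) simp_all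
  also have "\<dots> = int (6 * m * n * (m + n) * nat \<bar>int m - int n\<bar>)"
    by simp
  finally have "6 * int m * int n * (int m + int n) * (int m - int n) dvd
      int (6 * m * n * (m + n) * nat \<bar>int m - int n\<bar>)" .
  with assms(1) show "c dvd int (6 * m * n * (m + n) * nat \<bar>int m - int n\<bar>)"
    by (rule dvd_trans)
qed

lemma cancel_2: "2 \<cdot>\<^sub>\<int> x = 0 \<Longrightarrow> x = (0::'a)"
  by (rule cancel) (auto intro: dvd_mult2)

lemma cancel_3: "3 \<cdot>\<^sub>\<int> x = 0 \<Longrightarrow> x = (0::'a)"
  by (rule cancel) (auto intro: dvd_mult2)

lemma cancel_m: "int m \<cdot>\<^sub>\<int> x = 0 \<Longrightarrow> x = (0::'a)"
  by (rule cancel) (auto intro: dvd_mult2 dvd_mult)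

lemma cancel_n: "int n \<cdot>\<^sub>\<int> x = 0 \<Longrightarrow> x = (0::'a)"
  by (rule cancel) (auto intro: dvd_mult2 dvd_mult)

lemma cancel_sum: "(int m + int n) \<cdot>\<^sub>\<int> x = 0 \<Longrightarrow> x = (0::'a)"
  by (rule cancel) (auto intro: dvd_mult2 dvd_mult)

lemma cancel_diff: "(int m - int n) \<cdot>\<^sub>\<int> x = 0 \<Longrightarrow> x = (0::'a)"
  by (rule cancel) (auto intro: dvd_mult2 dvd_mult)

lemma torsion_free_2: "torsion_free 2 TYPE('a)"
  unfolding torsion_free_def natmul_eq_intmul using cancel_2 by simp

lemma cancel_2mn: "(2 * int m * int n) \<cdot>\<^sub>\<int> x = 0 \<Longrightarrow> x = (0::'a)"
  by (metis intmul_mult cancel_2 cancel_m cancel_n)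

end

(* Generalized (m,n)-Jordan derivations with associated map 0; F - d will be one. *)
locale left_mn_jordan = mn_torsion_free_semiprime m n for m n +
  fixes G :: "'a::ring \<Rightarrow> 'a"
  assumes additive: "additive G"
    and square: "\<And>x. (int m + int n) \<cdot>\<^sub>\<int> G (x * x) = (2 * int m) \<cdot>\<^sub>\<int> (G x * x)"
begin

lemma add: "G (x + y) = G x + G y"
  using additive unfolding additive_def by blast

lemma polar: "(int m + int n) \<cdot>\<^sub>\<int> G (u * v + v * u) = (2 * int m) \<cdot>\<^sub>\<int> (G u * v + G v * u)"
proof -
  have "(u + v) * (u + v) = u * u + (u * v + v * u) + v * v"
    by (simp add: algebra_simps)
  then have "(int m + int n) \<cdot>\<^sub>\<int> G (u * v + v * u) = (int m + int n) \<cdot>\<^sub>\<int> G ((u + v) * (u + v))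
      - (int m + int n) \<cdot>\<^sub>\<int> G (u * u) - (int m + int n) \<cdot>\<^sub>\<int> G (v * v)"
    by (simp add: add intmul_add_right)
  also have "\<dots> = (2 * int m) \<cdot>\<^sub>\<int> (G u * v + G v * u)"
    by (simp only: square add) (simp add: intmul_simps algebra_simps)
  finally show ?thesis .
qed

(* Compute G of (x\<^sup>2 y + y x\<^sup>2) x + x (x\<^sup>2 y + y x\<^sup>2) = x\<^sup>2 (y x + x y) + (y x + x y) x\<^sup>2 in two ways. *)
lemma key_identity: "(2 * int m) \<cdot>\<^sub>\<int> (G x * x * y * x) = (int m + int n) \<cdot>\<^sub>\<int> (G x * (x * x * y + y * (x * x)))"
proof -
  define D where "D u v = (int m + int n) \<cdot>\<^sub>\<int> G (u * v + v * u) - (2 * int m) \<cdot>\<^sub>\<int> (G u * v + G v * u)"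
    for u v
  have D_zero: "D u v = 0" for u v
    by (simp add: D_def polar)
  have "(2 * int m * (int m - int n)) \<cdot>\<^sub>\<int>
      ((2 * int m) \<cdot>\<^sub>\<int> (G x * x * y * x) - (int m + int n) \<cdot>\<^sub>\<int> (G x * (x * x * y + y * (x * x))))
    = (int m * int n + int m * int m) \<cdot>\<^sub>\<int> (D x x * x * y)
      + (int m * int n - int m * int m) \<cdot>\<^sub>\<int> (D x x * y * x)
      - (2 * int m * int n + 2 * int m * int m) \<cdot>\<^sub>\<int> (D (x * x) y * x)
      - ((int m + int n) * (int m + int n)) \<cdot>\<^sub>\<int> D (x * x * y + y * (x * x)) x
      + (2 * int m * int n + 2 * int m * int m) \<cdot>\<^sub>\<int> (D y x * x * x)
      + ((int m + int n) * (int m + int n)) \<cdot>\<^sub>\<int> D (x * x) (y * x + x * y)"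
    unfolding D_def by (simp add: add intmul_simps algebra_simps)
  also have "\<dots> = 0"
    by (simp add: D_zero)
  finally have "2 \<cdot>\<^sub>\<int> int m \<cdot>\<^sub>\<int> (int m - int n) \<cdot>\<^sub>\<int>
      ((2 * int m) \<cdot>\<^sub>\<int> (G x * x * y * x) - (int m + int n) \<cdot>\<^sub>\<int> (G x * (x * x * y + y * (x * x)))) = 0"
    by (simp only: intmul_mult)
  then show ?thesis
    using cancel_2 cancel_m cancel_diff by (metis eq_iff_diff_eq_0)
qed

lemma right_cube_zero: "G x * x * x * x = 0"
proof -
  have "2 \<cdot>\<^sub>\<int> int n \<cdot>\<^sub>\<int> (G x * x * x * x)
      = (int m + int n) \<cdot>\<^sub>\<int> (G x * (x * x * x + x * (x * x))) - (2 * int m) \<cdot>\<^sub>\<int> (G x * x * x * x)"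
    by (simp add: intmul_simps algebra_simps)
  also have "\<dots> = 0"
    using key_identity[of x x] by simp
  finally show ?thesis
    using cancel_2 cancel_n by blast
qed

lemma right_square_zero: "G x * x * x = 0"
proof (rule semiprimeD[OF semiprime])
  fix r
  have "(2 * int m) \<cdot>\<^sub>\<int> (G x * x * x * r * (G x * x * x))
      = (2 * int m) \<cdot>\<^sub>\<int> (G x * x * (x * r * G x * x) * x)"
    by (simp add: mult.assoc)
  also have "\<dots> = (int m + int n) \<cdot>\<^sub>\<int> (G x * x * x * x * r * G x * x + G x * x * r * (G x * x * x * x))"
    unfolding key_identity by (simp add: algebra_simps)
  also have "\<dots> = 0"
    by (simp add: right_cube_zero)
  finally show "G x * x * x * r * (G x * x * x) = 0"
    using cancel_2 cancel_m by (metis intmul_mult)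
qed

lemma right_product_zero: "G x * x = 0"
proof (rule semiprimeD[OF semiprime])
  fix r
  have "(2 * int m) \<cdot>\<^sub>\<int> (G x * x * r * (G x * x)) = (2 * int m) \<cdot>\<^sub>\<int> (G x * x * (r * G x) * x)"
    by (simp add: mult.assoc)
  also have "\<dots> = (int m + int n) \<cdot>\<^sub>\<int> (G x * x * x * r * G x + G x * r * (G x * x * x))"
    unfolding key_identity by (simp add: algebra_simps)
  also have "\<dots> = 0"
    by (simp add: right_square_zero)
  finally show "G x * x * r * (G x * x) = 0"
    using cancel_2 cancel_m by (metis intmul_mult)
qed

lemma anticommute: "G u * v + G v * u = 0"
  using right_product_zero[of "u + v"] right_product_zero[of u] right_product_zero[of v]
  by (simp add: add algebra_simps)

lemma jordan_product_zero: "G (u * v + v * u) = 0"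
  using polar[of u v] by (simp add: anticommute cancel_sum)

lemma zero: "G u = 0"
proof (rule semiprime_zero_if_annihilates_jordan_products[OF semiprime torsion_free_2])
  fix v w
  have "G u * (v * w + w * v) = - (G (v * w) + G (w * v)) * u"
    using anticommute[of u "v * w"] anticommute[of u "w * v"]
    by (simp add: algebra_simps eq_neg_iff_add_eq_0)
  also have "\<dots> = 0"
    using jordan_product_zero[of v w] by (simp add: add)
  finally show "G u * (v * w + w * v) = 0" .
qed

end

locale mn_jordan_derivation_semiprime = mn_torsion_free_semiprime m n for m n +
  fixes d :: "'a::ring \<Rightarrow> 'a"
  assumes mn_jordan: "mn_jordan_derivation m n d"
begin

lemma add: "d (x + y) = d x + d y"
  using mn_jordan unfolding mn_jordan_derivation_def additive_def by blast

lemma intmul: "d (c \<cdot>\<^sub>\<int> x) = c \<cdot>\<^sub>\<int> d x"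
  by (rule intmul_additive) (rule add)

lemma square: "(int m + int n) \<cdot>\<^sub>\<int> d (x * x) = (2 * int m) \<cdot>\<^sub>\<int> (d x * x) + (2 * int n) \<cdot>\<^sub>\<int> (x * d x)"
  using mn_jordan unfolding mn_jordan_derivation_def natmul_eq_intmul by simp

lemma polar:
  "(int m + int n) \<cdot>\<^sub>\<int> d (u * v + v * u)
    = (2 * int m) \<cdot>\<^sub>\<int> (d u * v + d v * u) + (2 * int n) \<cdot>\<^sub>\<int> (u * d v + v * d u)"
proof -
  have "(u + v) * (u + v) = u * u + (u * v + v * u) + v * v"
    by (simp add: algebra_simps)
  then have "(int m + int n) \<cdot>\<^sub>\<int> d (u * v + v * u) = (int m + int n) \<cdot>\<^sub>\<int> d ((u + v) * (u + v))
      - (int m + int n) \<cdot>\<^sub>\<int> d (u * u) - (int m + int n) \<cdot>\<^sub>\<int> d (v * v)"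
    by (simp add: add intmul_add_right)
  also have "\<dots> = (2 * int m) \<cdot>\<^sub>\<int> (d u * v + d v * u) + (2 * int n) \<cdot>\<^sub>\<int> (u * d v + v * d u)"
    by (simp only: square add) (simp add: intmul_simps algebra_simps)
  finally show ?thesis .
qed

definition key_form :: "'a \<Rightarrow> 'a \<Rightarrow> 'a \<Rightarrow> 'a" where
  "key_form x a y = ((int m + int n) * int n) \<cdot>\<^sub>\<int> (\<lbrakk>x, \<lbrakk>x, y\<rbrakk>\<rbrakk> * a)
     - ((int m + int n) * int m) \<cdot>\<^sub>\<int> (a * \<lbrakk>x, \<lbrakk>x, y\<rbrakk>\<rbrakk>) + (2 * int m * int n) \<cdot>\<^sub>\<int> \<lbrakk>x, \<lbrakk>y, \<lbrakk>x, a\<rbrakk>\<rbrakk>\<rbrakk>"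

(* As in left_mn_jordan.key_identity: compute d of
   (x\<^sup>2 y + y x\<^sup>2) x + x (x\<^sup>2 y + y x\<^sup>2) = x\<^sup>2 (y x + x y) + (y x + x y) x\<^sup>2 in two ways. *)
lemma key_form_zero: "key_form x (d x) y = 0"
proof -
  define D where "D u v = (int m + int n) \<cdot>\<^sub>\<int> d (u * v + v * u)
    - ((2 * int m) \<cdot>\<^sub>\<int> (d u * v + d v * u) + (2 * int n) \<cdot>\<^sub>\<int> (u * d v + v * d u))" for u v
  have D_zero: "D u v = 0" for u v
    by (simp add: D_def polar)
  have "(2 * (int m - int n)) \<cdot>\<^sub>\<int> key_form x (d x) y
    = (int m * int n + int m * int m) \<cdot>\<^sub>\<int> (D x x * x * y)
      + (int m * int n - int m * int m) \<cdot>\<^sub>\<int> (D x x * y * x)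
      - (2 * int m * int n + 2 * int m * int m) \<cdot>\<^sub>\<int> (D (x * x) y * x)
      - ((int m + int n) * (int m + int n)) \<cdot>\<^sub>\<int> D (x * x * y + y * (x * x)) x
      + (2 * int m * int n + 2 * int m * int m) \<cdot>\<^sub>\<int> (D y x * x * x)
      + ((int m + int n) * (int m + int n)) \<cdot>\<^sub>\<int> D (x * x) (y * x + x * y)
      - (2 * int m * int n) \<cdot>\<^sub>\<int> (x * D x x * y)
      - (2 * int n * int n + 2 * int m * int n) \<cdot>\<^sub>\<int> (x * D (x * x) y)
      + (2 * int n * int n + 2 * int m * int n) \<cdot>\<^sub>\<int> (x * x * D y x)
      - (int n * int n - int m * int n) \<cdot>\<^sub>\<int> (x * y * D x x)
      - (2 * int m * int n) \<cdot>\<^sub>\<int> (y * D x x * x)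
      + (int n * int n + int m * int n) \<cdot>\<^sub>\<int> (y * x * D x x)"
    unfolding D_def key_form_def commutator_def by (simp add: add intmul_simps algebra_simps)
  also have "\<dots> = 0"
    by (simp add: D_zero)
  finally have "2 \<cdot>\<^sub>\<int> (int m - int n) \<cdot>\<^sub>\<int> key_form x (d x) y = 0"
    by (simp only: intmul_mult)
  then show ?thesis
    using cancel_2 cancel_diff by blast
qed

lemma commutator3_zero: "\<lbrakk>x, \<lbrakk>x, \<lbrakk>x, d x\<rbrakk>\<rbrakk>\<rbrakk> = 0"
proof -
  have "key_form x (d x) x = (2 * int m * int n) \<cdot>\<^sub>\<int> \<lbrakk>x, \<lbrakk>x, \<lbrakk>x, d x\<rbrakk>\<rbrakk>\<rbrakk>"
    by (simp add: key_form_def commutator_def)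
  then show ?thesis
    using key_form_zero cancel_2mn by metis
qed

lemma key_left:
  "(int m + int n) \<cdot>\<^sub>\<int> (\<lbrakk>x, d x\<rbrakk> * \<lbrakk>x, \<lbrakk>x, y\<rbrakk>\<rbrakk>) + (2 * int n) \<cdot>\<^sub>\<int> (\<lbrakk>x, \<lbrakk>x, d x\<rbrakk>\<rbrakk> * \<lbrakk>x, y\<rbrakk>) = 0"
proof -
  have "int m \<cdot>\<^sub>\<int> ((int m + int n) \<cdot>\<^sub>\<int> (\<lbrakk>x, d x\<rbrakk> * \<lbrakk>x, \<lbrakk>x, y\<rbrakk>\<rbrakk>)
        + (2 * int n) \<cdot>\<^sub>\<int> (\<lbrakk>x, \<lbrakk>x, d x\<rbrakk>\<rbrakk> * \<lbrakk>x, y\<rbrakk>))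
    = key_form x (d x) (x * y) - x * key_form x (d x) y
      - (2 * int m * int n) \<cdot>\<^sub>\<int> (\<lbrakk>x, \<lbrakk>x, \<lbrakk>x, d x\<rbrakk>\<rbrakk>\<rbrakk> * y)"
    by (simp add: key_form_def commutator_def intmul_simps algebra_simps)
  also have "\<dots> = 0"
    by (simp add: key_form_zero commutator3_zero)
  finally show ?thesis
    by (rule cancel_m)
qed

lemma key_right:
  "(int m + int n) \<cdot>\<^sub>\<int> (\<lbrakk>x, \<lbrakk>x, y\<rbrakk>\<rbrakk> * \<lbrakk>x, d x\<rbrakk>) + (2 * int m) \<cdot>\<^sub>\<int> (\<lbrakk>x, y\<rbrakk> * \<lbrakk>x, \<lbrakk>x, d x\<rbrakk>\<rbrakk>) = 0"
proof -
  have "int n \<cdot>\<^sub>\<int> ((int m + int n) \<cdot>\<^sub>\<int> (\<lbrakk>x, \<lbrakk>x, y\<rbrakk>\<rbrakk> * \<lbrakk>x, d x\<rbrakk>)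
        + (2 * int m) \<cdot>\<^sub>\<int> (\<lbrakk>x, y\<rbrakk> * \<lbrakk>x, \<lbrakk>x, d x\<rbrakk>\<rbrakk>))
    = key_form x (d x) (y * x) - key_form x (d x) y * x
      - (2 * int m * int n) \<cdot>\<^sub>\<int> (y * \<lbrakk>x, \<lbrakk>x, \<lbrakk>x, d x\<rbrakk>\<rbrakk>\<rbrakk>)"
    by (simp add: key_form_def commutator_def intmul_simps algebra_simps)
  also have "\<dots> = 0"
    by (simp add: key_form_zero commutator3_zero)
  finally show ?thesis
    by (rule cancel_n)
qed

lemma commutator2_annihilates_left: "\<lbrakk>x, \<lbrakk>x, d x\<rbrakk>\<rbrakk> * \<lbrakk>x, \<lbrakk>x, y\<rbrakk>\<rbrakk> = 0"
proof -
  have "(int m + int n) \<cdot>\<^sub>\<int> (\<lbrakk>x, \<lbrakk>x, d x\<rbrakk>\<rbrakk> * \<lbrakk>x, \<lbrakk>x, y\<rbrakk>\<rbrakk>)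
    = x * ((int m + int n) \<cdot>\<^sub>\<int> (\<lbrakk>x, d x\<rbrakk> * \<lbrakk>x, \<lbrakk>x, y\<rbrakk>\<rbrakk>) + (2 * int n) \<cdot>\<^sub>\<int> (\<lbrakk>x, \<lbrakk>x, d x\<rbrakk>\<rbrakk> * \<lbrakk>x, y\<rbrakk>))
      - ((int m + int n) \<cdot>\<^sub>\<int> (\<lbrakk>x, d x\<rbrakk> * \<lbrakk>x, \<lbrakk>x, x * y\<rbrakk>\<rbrakk>)
        + (2 * int n) \<cdot>\<^sub>\<int> (\<lbrakk>x, \<lbrakk>x, d x\<rbrakk>\<rbrakk> * \<lbrakk>x, x * y\<rbrakk>))
      - (2 * int n) \<cdot>\<^sub>\<int> (\<lbrakk>x, \<lbrakk>x, \<lbrakk>x, d x\<rbrakk>\<rbrakk>\<rbrakk> * \<lbrakk>x, y\<rbrakk>)"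
    by (simp add: commutator_def intmul_simps algebra_simps)
  also have "\<dots> = 0"
    by (simp only: key_left commutator3_zero) simp
  finally show ?thesis
    by (rule cancel_sum)
qed

lemma commutator2_annihilates_right: "\<lbrakk>x, \<lbrakk>x, y\<rbrakk>\<rbrakk> * \<lbrakk>x, \<lbrakk>x, d x\<rbrakk>\<rbrakk> = 0"
proof -
  have "(int m + int n) \<cdot>\<^sub>\<int> (\<lbrakk>x, \<lbrakk>x, y\<rbrakk>\<rbrakk> * \<lbrakk>x, \<lbrakk>x, d x\<rbrakk>\<rbrakk>)
    = ((int m + int n) \<cdot>\<^sub>\<int> (\<lbrakk>x, \<lbrakk>x, y * x\<rbrakk>\<rbrakk> * \<lbrakk>x, d x\<rbrakk>)
        + (2 * int m) \<cdot>\<^sub>\<int> (\<lbrakk>x, y * x\<rbrakk> * \<lbrakk>x, \<lbrakk>x, d x\<rbrakk>\<rbrakk>))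
      - ((int m + int n) \<cdot>\<^sub>\<int> (\<lbrakk>x, \<lbrakk>x, y\<rbrakk>\<rbrakk> * \<lbrakk>x, d x\<rbrakk>) + (2 * int m) \<cdot>\<^sub>\<int> (\<lbrakk>x, y\<rbrakk> * \<lbrakk>x, \<lbrakk>x, d x\<rbrakk>\<rbrakk>)) * x
      - (2 * int m) \<cdot>\<^sub>\<int> (\<lbrakk>x, y\<rbrakk> * \<lbrakk>x, \<lbrakk>x, \<lbrakk>x, d x\<rbrakk>\<rbrakk>\<rbrakk>)"
    by (simp add: commutator_def intmul_simps algebra_simps)
  also have "\<dots> = 0"
    by (simp only: key_right commutator3_zero) simp
  finally show ?thesis
    by (rule cancel_sum)
qed

lemma commutator2_zero: "\<lbrakk>x, \<lbrakk>x, d x\<rbrakk>\<rbrakk> = 0"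
proof -
  define a where "a = d x"
  define a1 where "a1 = \<lbrakk>x, a\<rbrakk>"
  define a2 where "a2 = \<lbrakk>x, a1\<rbrakk>"
  have left: "a2 * \<lbrakk>x, \<lbrakk>x, y\<rbrakk>\<rbrakk> = 0" and right: "\<lbrakk>x, \<lbrakk>x, y\<rbrakk>\<rbrakk> * a2 = 0" for y
    unfolding a2_def a1_def a_def by (rule commutator2_annihilates_left commutator2_annihilates_right)+
  have "a2 * y * a2 + 2 \<cdot>\<^sub>\<int> (a2 * \<lbrakk>x, y\<rbrakk> * a1) = a2 * \<lbrakk>x, \<lbrakk>x, y * a\<rbrakk>\<rbrakk> - a2 * \<lbrakk>x, \<lbrakk>x, y\<rbrakk>\<rbrakk> * a" for y
    unfolding a2_def a1_def by (simp add: commutator_def intmul_simps algebra_simps)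
  then have one: "a2 * y * a2 + 2 \<cdot>\<^sub>\<int> (a2 * \<lbrakk>x, y\<rbrakk> * a1) = 0" for y
    by (simp add: left)
  have "a2 * y * a2 + 2 \<cdot>\<^sub>\<int> (a1 * \<lbrakk>x, y\<rbrakk> * a2) = \<lbrakk>x, \<lbrakk>x, a * y\<rbrakk>\<rbrakk> * a2 - a * (\<lbrakk>x, \<lbrakk>x, y\<rbrakk>\<rbrakk> * a2)" for y
    unfolding a2_def a1_def by (simp add: commutator_def intmul_simps algebra_simps)
  then have two: "a2 * y * a2 + 2 \<cdot>\<^sub>\<int> (a1 * \<lbrakk>x, y\<rbrakk> * a2) = 0" for y
    by (simp add: right)
  have symm: "a1 * y * a2 + a2 * y * a1 = 0" for y
  proof -
    define kl where "kl y = (int m + int n) \<cdot>\<^sub>\<int> (a1 * \<lbrakk>x, \<lbrakk>x, y\<rbrakk>\<rbrakk>) + (2 * int n) \<cdot>\<^sub>\<int> (a2 * \<lbrakk>x, y\<rbrakk>)"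
      for y
    define kr where "kr y = (int m + int n) \<cdot>\<^sub>\<int> (\<lbrakk>x, \<lbrakk>x, y\<rbrakk>\<rbrakk> * a1) + (2 * int m) \<cdot>\<^sub>\<int> (\<lbrakk>x, y\<rbrakk> * a2)"
      for y
    have "kl y = 0" "kr y = 0" for y
      unfolding kl_def kr_def a2_def a1_def a_def by (rule key_left key_right)+
    moreover have "(int m - int n) \<cdot>\<^sub>\<int> (a1 * y * a2 + a2 * y * a1)
      = - (kl (y * a) - kl y * a - (kr (a * y) - a * kr y))"
      unfolding kl_def kr_def a2_def a1_def by (simp add: commutator_def intmul_simps algebra_simps)
    ultimately show ?thesis
      using cancel_diff by simp
  qed
  have "2 \<cdot>\<^sub>\<int> (a2 * y * a2) = (a2 * y * a2 + 2 \<cdot>\<^sub>\<int> (a2 * \<lbrakk>x, y\<rbrakk> * a1))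
      + (a2 * y * a2 + 2 \<cdot>\<^sub>\<int> (a1 * \<lbrakk>x, y\<rbrakk> * a2)) - 2 \<cdot>\<^sub>\<int> (a1 * \<lbrakk>x, y\<rbrakk> * a2 + a2 * \<lbrakk>x, y\<rbrakk> * a1)" for y
    by (simp add: intmul_simps algebra_simps)
  then have "a2 * y * a2 = 0" for y
    using cancel_2 by (simp add: one two symm)
  then show ?thesis
    unfolding a2_def a1_def a_def by (rule semiprimeD[OF semiprime])
qed

lemma commutator_annihilates_left: "\<lbrakk>x, d x\<rbrakk> * \<lbrakk>x, \<lbrakk>x, y\<rbrakk>\<rbrakk> = 0"
  using key_left[of x y] cancel_sum by (simp add: commutator2_zero)

lemma commutator_annihilates_right: "\<lbrakk>x, \<lbrakk>x, y\<rbrakk>\<rbrakk> * \<lbrakk>x, d x\<rbrakk> = 0"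
  using key_right[of x y] cancel_sum by (simp add: commutator2_zero)

lemma commutator_sandwich_zero: "\<lbrakk>x, d x\<rbrakk> * \<lbrakk>x, y\<rbrakk> * \<lbrakk>x, d x\<rbrakk> = 0"
proof -
  have "2 \<cdot>\<^sub>\<int> (\<lbrakk>x, d x\<rbrakk> * \<lbrakk>x, y\<rbrakk> * \<lbrakk>x, d x\<rbrakk>) = \<lbrakk>x, d x\<rbrakk> * \<lbrakk>x, \<lbrakk>x, y * d x\<rbrakk>\<rbrakk>
      - \<lbrakk>x, d x\<rbrakk> * \<lbrakk>x, \<lbrakk>x, y\<rbrakk>\<rbrakk> * d x - \<lbrakk>x, d x\<rbrakk> * y * \<lbrakk>x, \<lbrakk>x, d x\<rbrakk>\<rbrakk>"
    by (simp add: commutator_def intmul_simps algebra_simps)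
  also have "\<dots> = 0"
    by (simp add: commutator_annihilates_left commutator2_zero)
  finally show ?thesis
    by (rule cancel_2)
qed

lemma commutator_square_zero: "\<lbrakk>x, d x\<rbrakk> * \<lbrakk>x, d x\<rbrakk> = 0"
proof -
  define a where "a = d x"
  define a1 where "a1 = \<lbrakk>x, a\<rbrakk>"
  have a2: "\<lbrakk>x, a1\<rbrakk> = 0"
    unfolding a1_def a_def by (rule commutator2_zero)
  have left: "a1 * \<lbrakk>x, \<lbrakk>x, y\<rbrakk>\<rbrakk> = 0" and right: "\<lbrakk>x, \<lbrakk>x, y\<rbrakk>\<rbrakk> * a1 = 0"
    and sandwich: "a1 * \<lbrakk>x, y\<rbrakk> * a1 = 0" for y
    unfolding a1_def a_def
    by (rule commutator_annihilates_left commutator_annihilates_right commutator_sandwich_zero)+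
  have "key_form x a (a1 * y) = (2 * int m * int n) \<cdot>\<^sub>\<int> (\<lbrakk>x, a1\<rbrakk> * y * a1 + a1 * \<lbrakk>x, y\<rbrakk> * a1 + a1 * y * \<lbrakk>x, a1\<rbrakk>
        - \<lbrakk>x, a1\<rbrakk> * a1 * y - a1 * \<lbrakk>x, a1\<rbrakk> * y - a1 * a1 * \<lbrakk>x, y\<rbrakk>)
      + ((int m + int n) * int n) \<cdot>\<^sub>\<int> ((\<lbrakk>x, \<lbrakk>x, a1\<rbrakk>\<rbrakk> * y + 2 \<cdot>\<^sub>\<int> (\<lbrakk>x, a1\<rbrakk> * \<lbrakk>x, y\<rbrakk>) + a1 * \<lbrakk>x, \<lbrakk>x, y\<rbrakk>\<rbrakk>) * a)
      - ((int m + int n) * int m) \<cdot>\<^sub>\<int> (a * (\<lbrakk>x, \<lbrakk>x, a1\<rbrakk>\<rbrakk> * y + 2 \<cdot>\<^sub>\<int> (\<lbrakk>x, a1\<rbrakk> * \<lbrakk>x, y\<rbrakk>) + a1 * \<lbrakk>x, \<lbrakk>x, y\<rbrakk>\<rbrakk>))" for y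
    unfolding a1_def by (simp add: key_form_def commutator_def intmul_simps algebra_simps)
  then have "(2 * int m * int n) \<cdot>\<^sub>\<int> (a1 * a1 * \<lbrakk>x, y\<rbrakk>) = 0" for y
    using key_form_zero[of x "a1 * y"] unfolding a_def[symmetric]
    by (simp add: a2 left sandwich intmul_minus_right)
  then have left_square: "a1 * a1 * \<lbrakk>x, y\<rbrakk> = 0" for y
    by (rule cancel_2mn)
  have "a1 * a1 = 0"
  proof (rule semiprimeD[OF semiprime])
    fix r
    have "a1 * a1 * r * (a1 * a1) = a1 * a1 * \<lbrakk>x, r * a\<rbrakk> * a1 - a1 * a1 * \<lbrakk>x, r\<rbrakk> * a * a1"
      unfolding a1_def by (simp add: commutator_def algebra_simps)
    then show "a1 * a1 * r * (a1 * a1) = 0"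
      by (simp add: left_square)
  qed
  then show ?thesis
    unfolding a1_def a_def .
qed

lemma shift: "d (x + t \<cdot>\<^sub>\<int> z) = d x + t \<cdot>\<^sub>\<int> d z"
  by (simp add: add intmul)

lemma commutator2_zero_polar: "\<lbrakk>z, \<lbrakk>x, d x\<rbrakk>\<rbrakk> + \<lbrakk>x, \<lbrakk>z, d x\<rbrakk>\<rbrakk> + \<lbrakk>x, \<lbrakk>x, d z\<rbrakk>\<rbrakk> = 0"
proof (rule polarize_cubic[where F = "\<lambda>p q r. \<lbrakk>p, \<lbrakk>q, r\<rbrakk>\<rbrakk>", OF _ _ _ _ cancel_2 cancel_3])
  show "\<lbrakk>x + t \<cdot>\<^sub>\<int> z, \<lbrakk>x + t \<cdot>\<^sub>\<int> z, d x + t \<cdot>\<^sub>\<int> d z\<rbrakk>\<rbrakk> = 0" for t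
    unfolding shift[symmetric] by (rule commutator2_zero)
qed (simp add: commutator_def algebra_simps)+

lemma commutator_annihilates_left_polar:
  "(\<lbrakk>x, d z\<rbrakk> + \<lbrakk>z, d x\<rbrakk>) * \<lbrakk>x, \<lbrakk>x, v\<rbrakk>\<rbrakk> + \<lbrakk>x, d x\<rbrakk> * (\<lbrakk>x, \<lbrakk>z, v\<rbrakk>\<rbrakk> + \<lbrakk>z, \<lbrakk>x, v\<rbrakk>\<rbrakk>) = 0"
proof -
  have "\<lbrakk>z, d x\<rbrakk> * \<lbrakk>x, \<lbrakk>x, v\<rbrakk>\<rbrakk> + \<lbrakk>x, d z\<rbrakk> * \<lbrakk>x, \<lbrakk>x, v\<rbrakk>\<rbrakk> + \<lbrakk>x, d x\<rbrakk> * \<lbrakk>z, \<lbrakk>x, v\<rbrakk>\<rbrakk>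
      + \<lbrakk>x, d x\<rbrakk> * \<lbrakk>x, \<lbrakk>z, v\<rbrakk>\<rbrakk> = 0"
  proof (rule polarize_quartic[where F = "\<lambda>p q r s. \<lbrakk>p, q\<rbrakk> * \<lbrakk>r, \<lbrakk>s, v\<rbrakk>\<rbrakk>",
        OF _ _ _ _ _ cancel_2 cancel_3])
    show "\<lbrakk>x + t \<cdot>\<^sub>\<int> z, d x + t \<cdot>\<^sub>\<int> d z\<rbrakk> * \<lbrakk>x + t \<cdot>\<^sub>\<int> z, \<lbrakk>x + t \<cdot>\<^sub>\<int> z, v\<rbrakk>\<rbrakk> = 0" for t
      unfolding shift[symmetric] by (rule commutator_annihilates_left)
  qed (simp add: commutator_def algebra_simps)+
  then show ?thesis
    by (simp add: algebra_simps)
qed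

lemma commutator_annihilates_right_polar:
  "\<lbrakk>x, \<lbrakk>x, v\<rbrakk>\<rbrakk> * (\<lbrakk>x, d z\<rbrakk> + \<lbrakk>z, d x\<rbrakk>) + (\<lbrakk>x, \<lbrakk>z, v\<rbrakk>\<rbrakk> + \<lbrakk>z, \<lbrakk>x, v\<rbrakk>\<rbrakk>) * \<lbrakk>x, d x\<rbrakk> = 0"
proof -
  have "\<lbrakk>z, \<lbrakk>x, v\<rbrakk>\<rbrakk> * \<lbrakk>x, d x\<rbrakk> + \<lbrakk>x, \<lbrakk>z, v\<rbrakk>\<rbrakk> * \<lbrakk>x, d x\<rbrakk> + \<lbrakk>x, \<lbrakk>x, v\<rbrakk>\<rbrakk> * \<lbrakk>z, d x\<rbrakk>
      + \<lbrakk>x, \<lbrakk>x, v\<rbrakk>\<rbrakk> * \<lbrakk>x, d z\<rbrakk> = 0"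
  proof (rule polarize_quartic[where F = "\<lambda>p q r s. \<lbrakk>p, \<lbrakk>q, v\<rbrakk>\<rbrakk> * \<lbrakk>r, s\<rbrakk>",
        OF _ _ _ _ _ cancel_2 cancel_3])
    show "\<lbrakk>x + t \<cdot>\<^sub>\<int> z, \<lbrakk>x + t \<cdot>\<^sub>\<int> z, v\<rbrakk>\<rbrakk> * \<lbrakk>x + t \<cdot>\<^sub>\<int> z, d x + t \<cdot>\<^sub>\<int> d z\<rbrakk> = 0" for t
      unfolding shift[symmetric] by (rule commutator_annihilates_right)
  qed (simp add: commutator_def algebra_simps)+
  then show ?thesis
    by (simp add: algebra_simps)
qed

lemma commutator_square_zero_polar:
  "\<lbrakk>x, d x\<rbrakk> * (\<lbrakk>x, d z\<rbrakk> + \<lbrakk>z, d x\<rbrakk>) + (\<lbrakk>x, d z\<rbrakk> + \<lbrakk>z, d x\<rbrakk>) * \<lbrakk>x, d x\<rbrakk> = 0"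
proof -
  have "\<lbrakk>z, d x\<rbrakk> * \<lbrakk>x, d x\<rbrakk> + \<lbrakk>x, d z\<rbrakk> * \<lbrakk>x, d x\<rbrakk> + \<lbrakk>x, d x\<rbrakk> * \<lbrakk>z, d x\<rbrakk>
      + \<lbrakk>x, d x\<rbrakk> * \<lbrakk>x, d z\<rbrakk> = 0"
  proof (rule polarize_quartic[where F = "\<lambda>p q r s. \<lbrakk>p, q\<rbrakk> * \<lbrakk>r, s\<rbrakk>", OF _ _ _ _ _ cancel_2 cancel_3])
    show "\<lbrakk>x + t \<cdot>\<^sub>\<int> z, d x + t \<cdot>\<^sub>\<int> d z\<rbrakk> * \<lbrakk>x + t \<cdot>\<^sub>\<int> z, d x + t \<cdot>\<^sub>\<int> d z\<rbrakk> = 0" for t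
      unfolding shift[symmetric] by (rule commutator_square_zero)
  qed (simp add: commutator_def algebra_simps)+
  then show ?thesis
    by (simp add: algebra_simps)
qed

lemma commutator_sandwich_zero_polar:
  "(\<lbrakk>x, d z\<rbrakk> + \<lbrakk>z, d x\<rbrakk>) * \<lbrakk>x, w\<rbrakk> * \<lbrakk>x, d x\<rbrakk> + \<lbrakk>x, d x\<rbrakk> * \<lbrakk>x, w\<rbrakk> * (\<lbrakk>x, d z\<rbrakk> + \<lbrakk>z, d x\<rbrakk>)
    + \<lbrakk>x, d x\<rbrakk> * \<lbrakk>z, w\<rbrakk> * \<lbrakk>x, d x\<rbrakk> = 0"
proof -
  define a c where "a = d x" and "c = d z"
  define q where "q = \<lbrakk>x, c\<rbrakk> + \<lbrakk>z, a\<rbrakk>"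
  define a1 where "a1 = \<lbrakk>x, a\<rbrakk>"
  define i1 where "i1 v = q * \<lbrakk>x, \<lbrakk>x, v\<rbrakk>\<rbrakk> + a1 * (\<lbrakk>x, \<lbrakk>z, v\<rbrakk>\<rbrakk> + \<lbrakk>z, \<lbrakk>x, v\<rbrakk>\<rbrakk>)" for v
  define i0 where "i0 v = a1 * \<lbrakk>x, \<lbrakk>x, v\<rbrakk>\<rbrakk>" for v
  define b1 where "b1 = \<lbrakk>z, a1\<rbrakk> + \<lbrakk>x, \<lbrakk>z, a\<rbrakk>\<rbrakk> + \<lbrakk>x, \<lbrakk>x, c\<rbrakk>\<rbrakk>"
  have "i1 v = 0" "i0 v = 0" for v
    unfolding i1_def i0_def q_def a1_def a_def c_def
    by (rule commutator_annihilates_left_polar commutator_annihilates_left)+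
  moreover have "\<lbrakk>x, a1\<rbrakk> = 0" "b1 = 0"
    unfolding b1_def a1_def a_def c_def by (rule commutator2_zero commutator2_zero_polar)+
  moreover have "2 \<cdot>\<^sub>\<int> (q * \<lbrakk>x, w\<rbrakk> * a1 + a1 * \<lbrakk>x, w\<rbrakk> * q + a1 * \<lbrakk>z, w\<rbrakk> * a1)
    = i1 (w * a) - i1 w * a + i0 (w * c) - i0 w * c + \<lbrakk>a, z\<rbrakk> * w * \<lbrakk>x, a1\<rbrakk> + \<lbrakk>c, x\<rbrakk> * w * \<lbrakk>x, a1\<rbrakk>
      - a1 * w * b1"
    unfolding i1_def i0_def b1_def q_def a1_def by (simp add: commutator_def intmul_simps algebra_simps)
  ultimately have "2 \<cdot>\<^sub>\<int> (q * \<lbrakk>x, w\<rbrakk> * a1 + a1 * \<lbrakk>x, w\<rbrakk> * q + a1 * \<lbrakk>z, w\<rbrakk> * a1) = 0"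
    by simp
  then show ?thesis
    unfolding q_def a1_def a_def c_def by (rule cancel_2)
qed

(* Every term on the right of the identity below vanishes by the lemmas above
   (a1 = [x, d x], q = [x, d z] + [z, d x]); semiprimeness then kills a1 z a1 and a1. *)
lemma commuting: "\<lbrakk>x, d x\<rbrakk> = 0"
proof -
  define a where "a = d x"
  define a1 where "a1 = \<lbrakk>x, a\<rbrakk>"
  have vanish: "a1 * z * a1 * w * a1 = 0" for z w
  proof -
    define q where "q = \<lbrakk>x, d z\<rbrakk> + \<lbrakk>z, a\<rbrakk>"
    define i1 where "i1 v = q * \<lbrakk>x, \<lbrakk>x, v\<rbrakk>\<rbrakk> + a1 * (\<lbrakk>x, \<lbrakk>z, v\<rbrakk>\<rbrakk> + \<lbrakk>z, \<lbrakk>x, v\<rbrakk>\<rbrakk>)" for v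
    define j1 where "j1 v = \<lbrakk>x, \<lbrakk>x, v\<rbrakk>\<rbrakk> * q + (\<lbrakk>x, \<lbrakk>z, v\<rbrakk>\<rbrakk> + \<lbrakk>z, \<lbrakk>x, v\<rbrakk>\<rbrakk>) * a1" for v
    define s1 where "s1 = a1 * q + q * a1"
    define w0 where "w0 v = a1 * \<lbrakk>x, v\<rbrakk> * a1" for v
    define w1 where "w1 v = q * \<lbrakk>x, v\<rbrakk> * a1 + a1 * \<lbrakk>x, v\<rbrakk> * q + a1 * \<lbrakk>z, v\<rbrakk> * a1" for v
    have "i1 v = 0" "j1 v = 0" "w0 v = 0" "w1 v = 0" for v
      unfolding i1_def j1_def w0_def w1_def q_def a1_def a_def
      by (rule commutator_annihilates_left_polar commutator_annihilates_right_polar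
          commutator_sandwich_zero commutator_sandwich_zero_polar)+
    moreover have "a1 * a1 = 0" "s1 = 0"
      unfolding s1_def q_def a1_def a_def by (rule commutator_square_zero commutator_square_zero_polar)+
    moreover have "a1 * z * a1 * w * a1 = a1 * j1 (a * w) - a1 * w1 w - a1 * a * j1 w + s1 * \<lbrakk>x, w\<rbrakk> * a1
        + i1 a * w * a1 + a1 * a1 * z * w * a1 + 2 \<cdot>\<^sub>\<int> w0 (\<lbrakk>a, z\<rbrakk> * w) - w1 (a1 * w)"
      unfolding i1_def j1_def s1_def w0_def w1_def q_def a1_def
      by (simp add: commutator_def intmul_simps algebra_simps)
    ultimately show ?thesis
      by simp
  qed
  have "a1 * z * a1 = 0" for z
  proof (rule semiprimeD[OF semiprime])
    fix r
    show "a1 * z * a1 * r * (a1 * z * a1) = 0"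
      using vanish[of z "r * a1 * z"] by (simp add: mult.assoc)
  qed
  then show ?thesis
    unfolding a_def[symmetric] a1_def[symmetric] by (rule semiprimeD[OF semiprime])
qed

lemma jordan: "d (x * x) = d x * x + x * d x"
proof -
  have "(int m + int n) \<cdot>\<^sub>\<int> (d (x * x) - d x * x - x * d x)
      = ((int m + int n) \<cdot>\<^sub>\<int> d (x * x) - ((2 * int m) \<cdot>\<^sub>\<int> (d x * x) + (2 * int n) \<cdot>\<^sub>\<int> (x * d x)))
        - (int m - int n) \<cdot>\<^sub>\<int> \<lbrakk>x, d x\<rbrakk>"
    by (simp add: commutator_def intmul_simps algebra_simps)
  also have "\<dots> = 0"
    by (simp add: square commuting)
  finally have "d (x * x) - d x * x - x * d x = 0"
    by (rule cancel_sum)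
  then show ?thesis
    by (simp add: diff_diff_eq)
qed

sublocale jordan_derivation_semiprime d
proof
  show "additive d"
    using mn_jordan unfolding mn_jordan_derivation_def by blast
qed (fact jordan torsion_free_2 semiprime)+

lemma central: "d x \<in> center"
  using commuting_derivation_central[OF derivation semiprime] commuting by blast

lemma generalized_eq:
  assumes F_additive: "additive F"
    and F_square: "\<And>x. (int m + int n) \<cdot>\<^sub>\<int> F (x * x) = (2 * int m) \<cdot>\<^sub>\<int> (F x * x) + (2 * int n) \<cdot>\<^sub>\<int> (x * d x)"
  shows "F x = d x"
proof -
  interpret difference: left_mn_jordan m n "\<lambda>x. F x - d x"
  proof
    show "additive (\<lambda>x. F x - d x)"
      using F_additive add unfolding additive_def by (simp add: algebra_simps)
    fix x
    have "x * d x = d x * x"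
      using commuting[of x] by (simp add: commutator_def)
    then have "(int m + int n) \<cdot>\<^sub>\<int> (F (x * x) - d (x * x))
        = (2 * int m) \<cdot>\<^sub>\<int> (F x * x) + (2 * int n) \<cdot>\<^sub>\<int> (d x * x) - (int m + int n) \<cdot>\<^sub>\<int> (d x * x + d x * x)"
      by (simp add: intmul_diff_right F_square jordan)
    also have "\<dots> = (2 * int m) \<cdot>\<^sub>\<int> ((F x - d x) * x)"
      by (simp add: intmul_simps algebra_simps)
    finally show "(int m + int n) \<cdot>\<^sub>\<int> (F (x * x) - d (x * x)) = (2 * int m) \<cdot>\<^sub>\<int> ((F x - d x) * x)" .
  qed
  show ?thesis
    using difference.zero[of x] by simp
qed

end

theorem theorem1p3:
  fixes F :: "'a::ring \<Rightarrow> 'a" and m n :: nat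
  assumes "m \<ge> 1" and "n \<ge> 1" and "m \<noteq> n"
    and "torsion_free (6 * m * n * (m + n) * (if m \<ge> n then m - n else n - m)) TYPE('a)"
    and "semiprime TYPE('a)"
    and "F \<noteq> (\<lambda>_. 0)"
    and "gen_mn_jordan_derivation m n F"
  shows "derivation F \<and> (\<forall>x. F x \<in> center)"
proof -
  obtain d where "mn_jordan_derivation m n d" and "additive F"
    and F_square: "\<And>x. natmul (m + n) (F (x * x)) = natmul (2 * m) (F x * x) + natmul (2 * n) (x * d x)"
    using assms(7) unfolding gen_mn_jordan_derivation_def by blast
  have "(if m \<ge> n then m - n else n - m) = nat \<bar>int m - int n\<bar>"
    by auto
  with assms(4,5) \<open>mn_jordan_derivation m n d\<close>
  interpret mn_jordan_derivation_semiprime m n d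
    by unfold_locales simp_all
  have "F = d"
  proof (rule ext, rule generalized_eq[OF \<open>additive F\<close>])
    show "(int m + int n) \<cdot>\<^sub>\<int> F (y * y) = (2 * int m) \<cdot>\<^sub>\<int> (F y * y) + (2 * int n) \<cdot>\<^sub>\<int> (y * d y)" for y
      using F_square[of y] by (simp add: natmul_eq_intmul)
  qed
  then show ?thesis
    using derivation central by simp
qed

end
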